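(* Let $d\ge2$ and $r>2d-2$. Then for every $f\in\mathcal C_r(\mathbb R^{2d})$ the integral $\int_{\Sigma_*}f(z)|z|^{-1}\,dz|_{\Sigma_*}$ converges absolutely, and $f\mapsto\int_{\Sigma_*}f(z)|z|^{-1}dz|_{\Sigma_*}$ is a continuous linear functional on $\mathcal C_r(\mathbb R^{2d})$.
   Context: $\Sigma_*=\{z=(x,y)\in\mathbb R^d\times\mathbb R^d: x\cdot y=0,\ z\ne0\}$, a smooth hypersurface of $\mathbb R^{2d}$, and $dz|_{\Sigma_*}$ its volume element induced from Euclidean $\mathbb R^{2d}$. $\mathcal C_r(\mathbb R^{n})$ is the space of continuous complex functions $f$ on $\mathbb R^n$ with finite norm $|f|_r=\sup_z|f(z)|\langle z\rangle^r$, $\langle z\rangle=(1+|z|^2)^{1/2}$. *)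

theory Defs
  imports "HOL-Analysis.Analysis"
begin

text \<open>The normalising constant is omega_s / 2^s, omega_s = pi^(s/2)/Gamma(s/2+1),
  so that on a smooth k-dimensional submanifold of Euclidean space the
  k-dimensional Hausdorff measure is the induced Riemannian volume.\<close>

definition hausdorff_const :: "real \<Rightarrow> real" where
  "hausdorff_const s = pi powr (s / 2) / Gamma (s / 2 + 1) / 2 powr s"

definition hausdorff_pre :: "real \<Rightarrow> real \<Rightarrow> 'a::metric_space set \<Rightarrow> ennreal" where
  "hausdorff_pre s \<delta> A =
     (INF C \<in> {C :: nat \<Rightarrow> 'a set. A \<subseteq> (\<Union>i. C i) \<and>
                  (\<forall>i. bounded (C i) \<and> diameter (C i) \<le> \<delta>)}.
        (\<Sum>i. ennreal (hausdorff_const s * diameter (C i) powr s)))"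

definition hausdorff_outer :: "real \<Rightarrow> 'a::metric_space set \<Rightarrow> ennreal" where
  "hausdorff_outer s A = (SUP \<delta> \<in> {0<..}. hausdorff_pre s \<delta> A)"

definition hausdorff_measure :: "real \<Rightarrow> 'a::metric_space measure" where
  "hausdorff_measure s = measure_of UNIV (sets borel) (hausdorff_outer s)"

definition Sigma_star :: "((real^'n) \<times> (real^'n)) set" where
  "Sigma_star = {(x, y). x \<bullet> y = 0 \<and> (x, y) \<noteq> 0}"

text \<open>Surface measure dz|Sigma_* : (2d-1)-dimensional Hausdorff measure on R^{2d}
  (integrals over Sigma_* are taken as set integrals over Sigma_star).\<close>

definition surf_measure :: "((real^'n) \<times> (real^'n)) measure" where
  "surf_measure = hausdorff_measure (real (2 * CARD('n) - 1))"

definition japanese :: "'a::real_normed_vector \<Rightarrow> real" where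
  "japanese z = sqrt (1 + (norm z)\<^sup>2)"

definition Cr_norm :: "real \<Rightarrow> ('a::real_normed_vector \<Rightarrow> complex) \<Rightarrow> real" where
  "Cr_norm r f = (SUP z. cmod (f z) * japanese z powr r)"

definition Cr_space :: "real \<Rightarrow> ('a::real_normed_vector \<Rightarrow> complex) set" where
  "Cr_space r = {f. continuous_on UNIV f \<and> bdd_above (range (\<lambda>z. cmod (f z) * japanese z powr r))}"

definition Sigma_functional :: "((real^'n) \<times> (real^'n) \<Rightarrow> complex) \<Rightarrow> complex" where
  "Sigma_functional f = (LINT z : Sigma_star | surf_measure. f z / complex_of_real (norm z))"

end

theory Submission
  imports Defs
begin

text \<open>
  Every point of Sigma_* lies in a cone |z| <= 2d |x_i| or |z| <= 2d |y_i|; on such a cone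
  Sigma_* is the image of a bounded piece of the hyperplane y_i = 0 under the chart
  (x, y) |-> (x, y - (x . y / x_i) e_i), which is Lipschitz there. A Lipschitz image of a
  (2d-1)-dimensional cube has finite (2d-1)-dimensional Hausdorff content, and Sigma_* is
  invariant under dilations, so the shell lam <= |z| <= 2 lam of Sigma_* has measure
  O(lam^(2d-1)). On that shell |f z| / |z| <= |f|_r min (lam^(-1), lam^(-r-1)), so summing
  over dyadic lam gives two geometric series, convergent for d >= 2 (small shells) and
  r > 2d - 2 (large shells). The resulting bound |Lambda f| <= C |f|_r and linearity give
  continuity.
\<close>

section \<open>Upper bounds for Hausdorff outer measure\<close>

lemma ennreal_mult_INF:
  fixes c :: ennreal
  assumes "c < top" "I \<noteq> {}"
  shows "c * (INF i\<in>I. f i) = (INF i\<in>I. c * f i)"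
proof -
  have "c * Inf (f ` I) = Inf ((*) c ` f ` I)"
  proof (rule continuous_at_Inf_mono)
    show "mono ((*) c)" by (simp add: monoI mult_left_mono)
    show "continuous (at_right (Inf (f ` I))) ((*) c)"
      by (rule continuous_on_imp_continuous_within[where s=UNIV])
        (auto intro: ennreal_continuous_on_cmult[OF assms(1) continuous_on_id])
  qed (use assms in auto)
  then show ?thesis by (simp add: image_image)
qed

lemma hausdorff_const_nonneg: "s \<ge> 0 \<Longrightarrow> hausdorff_const s \<ge> 0"
  unfolding hausdorff_const_def by (intro divide_nonneg_nonneg) auto

lemma bounded_diameter_le:
  fixes S :: "'a::metric_space set"
  assumes "\<And>x y. x \<in> S \<Longrightarrow> y \<in> S \<Longrightarrow> dist x y \<le> e" "e \<ge> 0"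
  shows "bounded S \<and> diameter S \<le> e"
proof (cases "S = {}")
  case False
  then obtain a where "a \<in> S" by auto
  then have "bounded S" unfolding bounded_def using assms by blast
  with False assms show ?thesis by (auto simp: diameter_def intro!: cSUP_least)
qed (use assms in simp)

lemma hausdorff_pre_mono:
  assumes "A \<subseteq> B"
  shows "hausdorff_pre s \<delta> A \<le> hausdorff_pre s \<delta> B"
  unfolding hausdorff_pre_def
proof (rule INF_mono)
  fix C :: "nat \<Rightarrow> 'a set"
  assume "C \<in> {C. B \<subseteq> (\<Union>i. C i) \<and> (\<forall>i. bounded (C i) \<and> diameter (C i) \<le> \<delta>)}"
  with assms show "\<exists>C'\<in>{C. A \<subseteq> (\<Union>i. C i) \<and> (\<forall>i. bounded (C i) \<and> diameter (C i) \<le> \<delta>)}.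
      (\<Sum>i. ennreal (hausdorff_const s * diameter (C' i) powr s))
    \<le> (\<Sum>i. ennreal (hausdorff_const s * diameter (C i) powr s))"
    by (intro bexI[of _ C]) auto
qed

lemma hausdorff_outer_mono:
  assumes "A \<subseteq> B"
  shows "hausdorff_outer s A \<le> hausdorff_outer s B"
  unfolding hausdorff_outer_def using hausdorff_pre_mono[OF assms] by (intro SUP_mono) blast

lemma hausdorff_pre_le_cover:
  assumes "A \<subseteq> (\<Union>i. C i)" "\<And>i. bounded (C i)" "\<And>i. diameter (C i) \<le> \<delta>"
  shows "hausdorff_pre s \<delta> A \<le> (\<Sum>i. ennreal (hausdorff_const s * diameter (C i) powr s))"
  unfolding hausdorff_pre_def by (rule INF_lower) (use assms in auto)

lemma hausdorff_pre_le_finite_cover: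
  fixes C :: "'j \<Rightarrow> 'a::metric_space set"
  assumes "finite J" "A \<subseteq> (\<Union>j\<in>J. C j)" "\<delta> \<ge> 0"
    and "\<And>j. j \<in> J \<Longrightarrow> bounded (C j) \<and> diameter (C j) \<le> \<delta>"
  shows "hausdorff_pre s \<delta> A \<le> (\<Sum>j\<in>J. ennreal (hausdorff_const s * diameter (C j) powr s))"
proof -
  obtain e where e: "bij_betw e {..<card J} J"
    using ex_bij_betw_nat_finite[OF assms(1)] unfolding atLeast0LessThan by blast
  define C' where "C' n = (if n < card J then C (e n) else {})" for n
  have "A \<subseteq> (\<Union>n. C' n)"
  proof
    fix x assume "x \<in> A"
    then obtain j where j: "j \<in> J" "x \<in> C j" using assms(2) by auto
    then have "j \<in> e ` {..<card J}" using e by (simp add: bij_betw_def)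
    then obtain n where "n < card J" "e n = j" by auto
    then show "x \<in> (\<Union>n. C' n)" using j unfolding C'_def by auto
  qed
  moreover have "bounded (C' n) \<and> diameter (C' n) \<le> \<delta>" for n
  proof (cases "n < card J")
    case True
    then show ?thesis using assms(4)[of "e n"] bij_betw_apply[OF e, of n] by (simp add: C'_def)
  qed (use assms(3) in \<open>simp add: C'_def\<close>)
  ultimately have "hausdorff_pre s \<delta> A \<le> (\<Sum>n. ennreal (hausdorff_const s * diameter (C' n) powr s))"
    by (intro hausdorff_pre_le_cover) auto
  also have "\<dots> = (\<Sum>n<card J. ennreal (hausdorff_const s * diameter (C' n) powr s))"
    by (rule suminf_finite) (simp_all add: C'_def)
  also have "\<dots> = (\<Sum>n<card J. ennreal (hausdorff_const s * diameter (C (e n)) powr s))"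
    by (intro sum.cong) (auto simp: C'_def)
  also have "\<dots> = (\<Sum>j\<in>J. ennreal (hausdorff_const s * diameter (C j) powr s))"
    by (rule sum.reindex_bij_betw[OF e])
  finally show ?thesis .
qed

lemma Lipschitz_image_bounded_diameter_le:
  fixes h :: "'a::metric_space \<Rightarrow> 'b::metric_space"
  assumes "L \<ge> 0" "bounded C"
    and lip: "\<And>u v. u \<in> D \<Longrightarrow> v \<in> D \<Longrightarrow> dist (h u) (h v) \<le> L * dist u v"
  shows "bounded (h ` (C \<inter> D)) \<and> diameter (h ` (C \<inter> D)) \<le> L * diameter C"
proof (rule bounded_diameter_le)
  fix a b assume "a \<in> h ` (C \<inter> D)" "b \<in> h ` (C \<inter> D)"
  then obtain u v where uv: "u \<in> C \<inter> D" "v \<in> C \<inter> D" "a = h u" "b = h v"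
    by auto
  then have "dist a b \<le> L * dist u v" using lip by simp
  also have "\<dots> \<le> L * diameter C"
    using diameter_bounded_bound[OF assms(2)] uv(1,2) assms(1) by (simp add: mult_left_mono)
  finally show "dist a b \<le> L * diameter C" .
qed (use diameter_ge_0[OF assms(2)] assms(1) in simp)

lemma hausdorff_pre_Lipschitz_image_le_cover:
  fixes h :: "'a::metric_space \<Rightarrow> 'b::metric_space"
  assumes "s \<ge> 0" "L > 0"
    and lip: "\<And>u v. u \<in> D \<Longrightarrow> v \<in> D \<Longrightarrow> dist (h u) (h v) \<le> L * dist u v"
    and C: "D \<subseteq> (\<Union>i. C i)" "\<And>i. bounded (C i)" "\<And>i. diameter (C i) \<le> \<delta>"
  shows "hausdorff_pre s (L * \<delta>) (h ` D)
    \<le> ennreal (L powr s) * (\<Sum>i. ennreal (hausdorff_const s * diameter (C i) powr s))"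
proof -
  define C' where "C' i = h ` (C i \<inter> D)" for i
  have C': "bounded (C' i) \<and> diameter (C' i) \<le> L * diameter (C i)" for i
    unfolding C'_def using assms(2) C(2) lip by (intro Lipschitz_image_bounded_diameter_le) auto
  have "h ` D \<subseteq> (\<Union>i. C' i)" using C(1) unfolding C'_def by blast
  moreover have "diameter (C' i) \<le> L * \<delta>" for i
    using C'[of i] C(3)[of i] \<open>L > 0\<close> by (meson mult_left_mono order_trans less_imp_le)
  ultimately have "hausdorff_pre s (L * \<delta>) (h ` D)
      \<le> (\<Sum>i. ennreal (hausdorff_const s * diameter (C' i) powr s))"
    using C' by (intro hausdorff_pre_le_cover) auto
  also have "\<dots> \<le> (\<Sum>i. ennreal (L powr s) * ennreal (hausdorff_const s * diameter (C i) powr s))"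
  proof (intro suminf_le summableI)
    fix i
    have "diameter (C' i) powr s \<le> (L * diameter (C i)) powr s"
      using C'[of i] diameter_ge_0[of "C' i"] assms(1) by (intro powr_mono2) auto
    also have "\<dots> = L powr s * diameter (C i) powr s"
      using diameter_ge_0[OF C(2)] assms(2) by (simp add: powr_mult)
    finally have "hausdorff_const s * diameter (C' i) powr s
        \<le> hausdorff_const s * (L powr s * diameter (C i) powr s)"
      using hausdorff_const_nonneg[OF assms(1)] by (rule mult_left_mono)
    also have "\<dots> = L powr s * (hausdorff_const s * diameter (C i) powr s)"
      by (simp only: mult.left_commute)
    finally show "ennreal (hausdorff_const s * diameter (C' i) powr s)
        \<le> ennreal (L powr s) * ennreal (hausdorff_const s * diameter (C i) powr s)"
      by (simp add: ennreal_leI ennreal_mult'[symmetric])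
  qed
  also have "\<dots> = ennreal (L powr s) * (\<Sum>i. ennreal (hausdorff_const s * diameter (C i) powr s))"
    by simp
  finally show ?thesis .
qed

lemma hausdorff_pre_Lipschitz_image:
  fixes h :: "'a::metric_space \<Rightarrow> 'b::metric_space"
  assumes "s \<ge> 0" "L > 0"
    and lip: "\<And>u v. u \<in> D \<Longrightarrow> v \<in> D \<Longrightarrow> dist (h u) (h v) \<le> L * dist u v"
  shows "hausdorff_pre s (L * \<delta>) (h ` D) \<le> ennreal (L powr s) * hausdorff_pre s \<delta> D"
proof -
  define covers where
    "covers = {C :: nat \<Rightarrow> 'a set. D \<subseteq> (\<Union>i. C i) \<and> (\<forall>i. bounded (C i) \<and> diameter (C i) \<le> \<delta>)}"
  define cost where "cost C = (\<Sum>i. ennreal (hausdorff_const s * diameter (C i) powr s))"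
    for C :: "nat \<Rightarrow> 'a set"
  show ?thesis
  proof (cases "covers = {}")
    case True
    then have "hausdorff_pre s \<delta> D = top"
      by (simp add: hausdorff_pre_def covers_def[symmetric])
    then show ?thesis using \<open>L > 0\<close> by (simp add: ennreal_mult_top)
  next
    case False
    have "hausdorff_pre s (L * \<delta>) (h ` D) \<le> (INF C\<in>covers. ennreal (L powr s) * cost C)"
      unfolding covers_def cost_def
      by (intro INF_greatest hausdorff_pre_Lipschitz_image_le_cover[OF assms]) auto
    also have "\<dots> = ennreal (L powr s) * hausdorff_pre s \<delta> D"
      using False
      by (simp add: ennreal_mult_INF hausdorff_pre_def covers_def[symmetric] cost_def[abs_def])
    finally show ?thesis .
  qed
qed

lemma hausdorff_outer_Lipschitz_image:
  fixes h :: "'a::metric_space \<Rightarrow> 'b::metric_space"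
  assumes "s \<ge> 0" "L > 0"
    and "\<And>u v. u \<in> D \<Longrightarrow> v \<in> D \<Longrightarrow> dist (h u) (h v) \<le> L * dist u v"
  shows "hausdorff_outer s (h ` D) \<le> ennreal (L powr s) * hausdorff_outer s D"
  unfolding hausdorff_outer_def
proof (rule SUP_least)
  fix \<delta> :: real assume "\<delta> \<in> {0<..}"
  then have "\<delta> / L > 0" using \<open>L > 0\<close> by simp
  have "hausdorff_pre s \<delta> (h ` D) = hausdorff_pre s (L * (\<delta> / L)) (h ` D)"
    using \<open>L > 0\<close> by simp
  also have "\<dots> \<le> ennreal (L powr s) * hausdorff_pre s (\<delta> / L) D"
    by (rule hausdorff_pre_Lipschitz_image[OF assms])
  also have "\<dots> \<le> ennreal (L powr s) * (SUP \<delta>\<in>{0<..}. hausdorff_pre s \<delta> D)"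
    using \<open>\<delta> / L > 0\<close> by (intro mult_left_mono SUP_upper) auto
  finally show "hausdorff_pre s \<delta> (h ` D) \<le> ennreal (L powr s) * (SUP \<delta>\<in>{0<..}. hausdorff_pre s \<delta> D)" .
qed

lemma sets_hausdorff_measure [simp]: "sets (hausdorff_measure s) = sets borel"
  unfolding hausdorff_measure_def using sets.sigma_sets_eq[of borel] by simp

text \<open>This holds whether or not \<^const>\<open>measure_of\<close> accepts \<^const>\<open>hausdorff_outer\<close> as a
  measure on the Borel sets (if not, the measure is zero).\<close>

lemma emeasure_hausdorff_measure_le:
  assumes "A \<in> sets borel"
  shows "emeasure (hausdorff_measure s) A \<le> hausdorff_outer s A"
  unfolding hausdorff_measure_def emeasure_measure_of_conv
  using assms sets.sigma_sets_eq[of borel] by simp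

section \<open>Cubes in coordinate subspaces\<close>

definition subspace_cube :: "'a::euclidean_space set \<Rightarrow> real \<Rightarrow> 'a set" where
  "subspace_cube B R = {z. (\<forall>b\<in>B. \<bar>z \<bullet> b\<bar> \<le> R) \<and> (\<forall>b\<in>Basis - B. z \<bullet> b = 0)}"

definition grid_cell :: "'a::euclidean_space set \<Rightarrow> nat \<Rightarrow> ('a \<Rightarrow> int) \<Rightarrow> 'a set" where
  "grid_cell B N p = {z. (\<forall>b\<in>B. of_int (p b) \<le> real N * (z \<bullet> b) \<and> real N * (z \<bullet> b) \<le> of_int (p b) + 1)
      \<and> (\<forall>b\<in>Basis - B. z \<bullet> b = 0)}"

lemma dist_grid_cell_le:
  assumes "B \<subseteq> Basis" "N > 0" "z \<in> grid_cell B N p" "w \<in> grid_cell B N p"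
  shows "dist z w \<le> card B / N"
proof -
  have coord: "\<bar>(z - w) \<bullet> b\<bar> \<le> (if b \<in> B then 1 / N else 0)" if "b \<in> Basis" for b
  proof (cases "b \<in> B")
    case True
    then have "\<bar>real N * (z \<bullet> b) - real N * (w \<bullet> b)\<bar> \<le> 1"
      using assms(3,4) unfolding grid_cell_def by fastforce
    then have "real N * \<bar>(z - w) \<bullet> b\<bar> \<le> 1"
      by (simp add: inner_diff_left right_diff_distrib[symmetric] abs_mult)
    then show ?thesis using True assms(2) by (simp add: field_simps)
  next
    case False
    then show ?thesis using assms(3,4) that unfolding grid_cell_def by (simp add: inner_diff_left)
  qed
  have "dist z w \<le> (\<Sum>b\<in>Basis. \<bar>(z - w) \<bullet> b\<bar>)"
    unfolding dist_norm by (rule norm_le_l1)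
  also have "\<dots> \<le> (\<Sum>b\<in>Basis. if b \<in> B then 1 / N else 0)"
    using coord by (rule sum_mono)
  also have "\<dots> = card B / N"
    using assms(1) by (simp add: sum.If_cases Int_absorb1)
  finally show ?thesis .
qed

lemma subspace_cube_subset_grid_cells:
  assumes "R \<ge> 0"
  shows "subspace_cube B R \<subseteq>
    (\<Union>p\<in>(\<Pi>\<^sub>E b\<in>B. {- int (nat \<lceil>R * N\<rceil>)..int (nat \<lceil>R * N\<rceil>)}). grid_cell B N p)"
proof
  fix z assume z: "z \<in> subspace_cube B R"
  define p where "p = restrict (\<lambda>b. \<lfloor>real N * (z \<bullet> b)\<rfloor>) B"
  have "\<lfloor>real N * (z \<bullet> b)\<rfloor> \<in> {- int (nat \<lceil>R * N\<rceil>)..int (nat \<lceil>R * N\<rceil>)}" if "b \<in> B" for b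
  proof -
    have "\<bar>z \<bullet> b\<bar> \<le> R" using z that unfolding subspace_cube_def by blast
    then have "\<bar>real N * (z \<bullet> b)\<bar> \<le> R * N"
      using mult_right_mono[of "\<bar>z \<bullet> b\<bar>" R "real N"] by (simp add: abs_mult mult.commute)
    then show ?thesis by (simp add: abs_le_iff; linarith)
  qed
  then have "p \<in> (\<Pi>\<^sub>E b\<in>B. {- int (nat \<lceil>R * N\<rceil>)..int (nat \<lceil>R * N\<rceil>)})"
    unfolding p_def by simp
  moreover have "z \<in> grid_cell B N p"
    using z unfolding grid_cell_def subspace_cube_def p_def by (simp add: of_int_floor_le)
  ultimately show "z \<in> (\<Union>p\<in>(\<Pi>\<^sub>E b\<in>B. {- int (nat \<lceil>R * N\<rceil>)..int (nat \<lceil>R * N\<rceil>)}). grid_cell B N p)"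
    by blast
qed

lemma hausdorff_pre_subspace_cube_le:
  fixes R :: real and N :: nat
  assumes "B \<subseteq> Basis" "R \<ge> 0" "N > 0" "card B / N \<le> \<delta>"
  shows "hausdorff_pre (card B) \<delta> (subspace_cube B R)
    \<le> ennreal ((2 * nat \<lceil>R * N\<rceil> + 1) ^ card B * (hausdorff_const (card B) * (card B / N) ^ card B))"
proof -
  have "finite B" using assms(1) finite_subset finite_Basis by blast
  define m where "m = card B"
  define J where "J = (\<Pi>\<^sub>E b\<in>B. {- int (nat \<lceil>R * N\<rceil>)..int (nat \<lceil>R * N\<rceil>)})"
  have cells: "bounded (grid_cell B N p) \<and> diameter (grid_cell B N p) \<le> m / N" for p
    by (rule bounded_diameter_le) (use dist_grid_cell_le[OF assms(1,3)] in \<open>auto simp: m_def\<close>)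
  have "hausdorff_pre m \<delta> (subspace_cube B R)
      \<le> (\<Sum>p\<in>J. ennreal (hausdorff_const m * diameter (grid_cell B N p) powr m))"
  proof (rule hausdorff_pre_le_finite_cover)
    show "finite J" unfolding J_def using \<open>finite B\<close> by (intro finite_PiE) auto
    show "subspace_cube B R \<subseteq> (\<Union>p\<in>J. grid_cell B N p)"
      unfolding J_def by (rule subspace_cube_subset_grid_cells[OF assms(2)])
    have "0 \<le> card B / N" by simp
    then show "0 \<le> \<delta>" using assms(4) by linarith
  qed (use cells assms(4) in \<open>auto simp: m_def intro: order_trans\<close>)
  also have "\<dots> \<le> (\<Sum>p\<in>J. ennreal (hausdorff_const m * (m / N) ^ m))"
  proof (intro sum_mono ennreal_leI mult_left_mono)
    fix p
    have "diameter (grid_cell B N p) powr m \<le> (m / N) powr m"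
      using cells diameter_ge_0 by (intro powr_mono2) auto
    moreover have "(m / N) powr m \<le> (m / N) ^ m"
      using assms(3) by (cases "m = 0") (simp_all add: powr_realpow)
    ultimately show "diameter (grid_cell B N p) powr m \<le> (m / N) ^ m"
      by (rule order_trans)
  qed (simp add: hausdorff_const_nonneg)
  also have "\<dots> = ennreal ((2 * nat \<lceil>R * N\<rceil> + 1) ^ m * (hausdorff_const m * (m / N) ^ m))"
  proof -
    have "card J = (2 * nat \<lceil>R * N\<rceil> + 1) ^ m"
      unfolding J_def m_def using \<open>finite B\<close> by (simp add: card_PiE nat_add_distrib nat_mult_distrib)
    then show ?thesis
      using hausdorff_const_nonneg[of m] by (simp add: ennreal_mult' ennreal_of_nat_eq_real_of_nat)
  qed
  finally show ?thesis unfolding m_def .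
qed

lemma hausdorff_outer_subspace_cube_le:
  assumes "B \<subseteq> Basis" "R \<ge> 0"
  shows "hausdorff_outer (card B) (subspace_cube B R)
    \<le> ennreal (hausdorff_const (card B) * ((2 * R + 3) * card B) ^ card B)"
  unfolding hausdorff_outer_def
proof (rule SUP_least)
  fix \<delta> :: real assume "\<delta> \<in> {0<..}"
  define m where "m = card B"
  define N :: nat where "N = nat \<lceil>m / \<delta>\<rceil> + 1"
  define a where "a = nat \<lceil>R * N\<rceil>"
  have "N > 0" unfolding N_def by simp
  have "m / \<delta> \<le> N" unfolding N_def by linarith
  then have "m / N \<le> \<delta>"
    using \<open>N > 0\<close> \<open>\<delta> \<in> {0<..}\<close> by (simp add: field_simps)
  have "real (2 * a + 1) \<le> (2 * R + 3) * N"
    unfolding a_def using \<open>N > 0\<close> assms(2) by (simp add: algebra_simps) linarith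
  then have "real (2 * a + 1) ^ m \<le> ((2 * R + 3) * N) ^ m"
    by (rule power_mono) simp
  then have "(2 * a + 1) ^ m * (hausdorff_const m * (m / N) ^ m)
      \<le> ((2 * R + 3) * N) ^ m * (hausdorff_const m * (m / N) ^ m)"
    using hausdorff_const_nonneg[of m] by (intro mult_right_mono) auto
  also have "\<dots> = hausdorff_const m * ((2 * R + 3) * N * (m / N)) ^ m"
    by (simp only: power_mult_distrib mult_ac)
  also have "(2 * R + 3) * N * (m / N) = (2 * R + 3) * m"
    using \<open>N > 0\<close> by simp
  finally have "ennreal ((2 * a + 1) ^ m * (hausdorff_const m * (m / N) ^ m))
      \<le> ennreal (hausdorff_const m * ((2 * R + 3) * m) ^ m)"
    by (rule ennreal_leI)
  with hausdorff_pre_subspace_cube_le[OF assms \<open>N > 0\<close> \<open>m / N \<le> \<delta>\<close>[unfolded m_def]]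
  show "hausdorff_pre (card B) \<delta> (subspace_cube B R)
      \<le> ennreal (hausdorff_const (card B) * ((2 * R + 3) * card B) ^ card B)"
    unfolding m_def a_def by (rule order_trans)
qed

section \<open>Integrability of the weight over dyadic shells\<close>

definition shell :: "'a::real_normed_vector set \<Rightarrow> real \<Rightarrow> 'a set" where
  "shell A lam = A \<inter> {z. lam \<le> norm z \<and> norm z \<le> 2 * lam}"

lemma shell_borel:
  assumes "A \<in> sets borel"
  shows "shell A lam \<in> sets borel"
  unfolding shell_def
  by (intro sets.Int borel_closed closed_Collect_conj closed_Collect_le assms)
    (auto intro!: continuous_intros)

lemma japanese_ge_one: "japanese z \<ge> 1"
  unfolding japanese_def by simp

lemma norm_le_japanese: "norm z \<le> japanese z"
  unfolding japanese_def by (simp add: real_le_rsqrt)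

lemma japanese_weight_le:
  assumes "lam > 0" "lam \<le> norm z" "r \<ge> 0"
  shows "japanese z powr (-r) / norm z \<le> lam powr (-r - 1)"
    and "japanese z powr (-r) / norm z \<le> 1 / lam"
proof -
  have "japanese z powr (-r) \<le> lam powr (-r)"
    using assms norm_le_japanese[of z] by (intro powr_mono2') auto
  then have "japanese z powr (-r) / norm z \<le> lam powr (-r) / lam"
    using assms by (intro frac_le) auto
  also have "\<dots> = lam powr (-r - 1)" using assms(1) by (simp add: powr_diff)
  finally show "japanese z powr (-r) / norm z \<le> lam powr (-r - 1)" .
  have "japanese z powr (-r) \<le> 1"
    using assms(3) japanese_ge_one[of z] powr_mono2'[of "-r" 1 "japanese z"] by simp
  then show "japanese z powr (-r) / norm z \<le> 1 / lam"
    using assms by (intro frac_le) auto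
qed

lemma exists_dyadic_scale:
  fixes t :: real
  assumes "t > 0"
  shows "\<exists>k::int. 2 powr k \<le> t \<and> t \<le> 2 * 2 powr k"
proof -
  define k where "k = \<lfloor>log 2 t\<rfloor>"
  have "2 powr k \<le> t" "t < 2 powr (k + 1)"
    using floor_log_eq_powr_iff[OF assms, of 2 k] k_def by auto
  then show ?thesis by (intro exI[of _ k]) (simp add: powr_add)
qed

lemma powr_of_nat_mult:
  fixes x :: real
  assumes "x > 0"
  shows "x powr (real n * a) = (x powr a) ^ n"
proof -
  have "x powr (real n * a) = (x powr a) powr real n"
    by (subst powr_powr) (simp only: mult.commute)
  also have "\<dots> = (x powr a) ^ n"
    using assms by (intro powr_realpow) simp
  finally show ?thesis .
qed

text \<open>On the shell of radius 2^n the weight is at most 2^(-n(r+1)), on the shell of radius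
  2^(-(n+1)) at most 2^(n+1).\<close>

definition dyadic_majorant :: "'a::real_normed_vector set \<Rightarrow> real \<Rightarrow> nat \<Rightarrow> 'a \<Rightarrow> ennreal" where
  "dyadic_majorant A r n z =
     ennreal ((2 powr (-r - 1)) ^ n) * indicator (shell A (2 powr real n)) z
     + ennreal (2 ^ Suc n) * indicator (shell A (2 powr - real (Suc n))) z"

lemma japanese_weight_le_dyadic_majorant:
  assumes "r \<ge> 0"
  shows "ennreal (indicator A z * (japanese z powr (-r) / norm z)) \<le> (\<Sum>n. dyadic_majorant A r n z)"
proof (cases "z \<in> A \<and> z \<noteq> 0")
  case True
  then obtain k :: int where k: "2 powr k \<le> norm z" "norm z \<le> 2 * 2 powr k"
    using exists_dyadic_scale[of "norm z"] by auto
  have "\<exists>n. ennreal (japanese z powr (-r) / norm z) \<le> dyadic_majorant A r n z"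
  proof (cases "k \<ge> 0")
    case True
    define n where "n = nat k"
    have "real_of_int k = real n" using True by (simp add: n_def)
    then have "z \<in> shell A (2 powr real n)" using k \<open>z \<in> A \<and> z \<noteq> 0\<close> by (simp add: shell_def)
    have "japanese z powr (-r) / norm z \<le> (2 powr real n) powr (-r - 1)"
      using japanese_weight_le(1)[of "2 powr real n" z r] k assms \<open>real_of_int k = real n\<close> by simp
    also have "\<dots> = (2 powr (-r - 1)) ^ n" by (simp add: powr_powr powr_of_nat_mult)
    finally show ?thesis
      unfolding dyadic_majorant_def using \<open>z \<in> shell A (2 powr real n)\<close>
      by (intro exI[of _ n] add_increasing2) (simp_all add: ennreal_leI)
  next
    case False
    define n where "n = nat (- k - 1)"
    have "real_of_int k = - real (Suc n)" using False by (simp add: n_def)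
    then have "z \<in> shell A (2 powr - real (Suc n))" using k \<open>z \<in> A \<and> z \<noteq> 0\<close> by (simp add: shell_def)
    have "japanese z powr (-r) / norm z \<le> 1 / 2 powr (- real (Suc n))"
      using japanese_weight_le(2)[of "2 powr (- real (Suc n))" z r] k assms
        \<open>real_of_int k = - real (Suc n)\<close> by simp
    also have "\<dots> = 2 powr real (Suc n)"
      by (simp only: powr_minus divide_inverse mult_1 inverse_inverse_eq)
    also have "\<dots> = 2 ^ Suc n" by (rule powr_realpow) simp
    finally show ?thesis
      unfolding dyadic_majorant_def using \<open>z \<in> shell A (2 powr - real (Suc n))\<close>
      by (intro exI[of _ n] add_increasing) (simp_all add: ennreal_leI)
  qed
  then obtain n where "ennreal (japanese z powr (-r) / norm z) \<le> dyadic_majorant A r n z" ..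
  also have "\<dots> \<le> (\<Sum>n. dyadic_majorant A r n z)"
    using sum_le_suminf[OF summableI, of "{n}" "\<lambda>n. dyadic_majorant A r n z"] by simp
  finally show ?thesis using True by simp
qed (auto simp: indicator_def)

lemma nn_integral_dyadic_majorant_le:
  fixes M :: "'a::real_normed_vector measure"
  assumes sets: "sets M = sets borel" and A: "A \<in> sets borel"
    and shells: "\<And>lam. lam > 0 \<Longrightarrow> emeasure M (shell A lam) \<le> ennreal (K * lam powr s)"
  shows "(\<integral>\<^sup>+z. dyadic_majorant A r n z \<partial>M)
    \<le> ennreal (K * (2 powr (s - r - 1)) ^ n) + ennreal (K * (2 powr (1 - s)) ^ Suc n)"
proof -
  have sets_M: "shell A (2 powr real n) \<in> sets M" "shell A (2 powr - real (Suc n)) \<in> sets M"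
    unfolding sets using A by (simp_all add: shell_borel)
  have "(2 powr real n) powr s = (2 powr s) ^ n"
    by (simp add: powr_powr powr_of_nat_mult)
  moreover have "2 powr (-r - 1) * 2 powr s = 2 powr (s - r - 1)"
    unfolding powr_add[symmetric] by (rule arg_cong[where f = "\<lambda>t. 2 powr t"]) simp
  ultimately have outer: "(2 powr (-r - 1)) ^ n * (K * (2 powr real n) powr s) = K * (2 powr (s - r - 1)) ^ n"
    by (simp add: power_mult_distrib[symmetric])
  have "(2 powr - real (Suc n)) powr s = 2 powr (real (Suc n) * - s)"
    by (simp only: powr_powr mult_minus_left mult_minus_right)
  also have "\<dots> = (2 powr - s) ^ Suc n"
    by (rule powr_of_nat_mult) simp
  moreover have "2 * 2 powr - s = 2 powr (1 - s)"
    using powr_add[of 2 1 "- s"] by simp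
  ultimately have inner: "2 ^ Suc n * (K * (2 powr - real (Suc n)) powr s) = K * (2 powr (1 - s)) ^ Suc n"
    by (simp only: power_mult_distrib[symmetric] mult.left_commute)
  have "(\<integral>\<^sup>+z. dyadic_majorant A r n z \<partial>M)
      = ennreal ((2 powr (-r - 1)) ^ n) * emeasure M (shell A (2 powr real n))
        + ennreal (2 ^ Suc n) * emeasure M (shell A (2 powr - real (Suc n)))"
    unfolding dyadic_majorant_def using sets_M by (simp add: nn_integral_add nn_integral_cmult_indicator)
  also have "\<dots> \<le> ennreal ((2 powr (-r - 1)) ^ n) * ennreal (K * (2 powr real n) powr s)
      + ennreal (2 ^ Suc n) * ennreal (K * (2 powr - real (Suc n)) powr s)"
    by (intro add_mono mult_left_mono shells) simp_all
  also have "\<dots> = ennreal ((2 powr (-r - 1)) ^ n * (K * (2 powr real n) powr s))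
      + ennreal (2 ^ Suc n * (K * (2 powr - real (Suc n)) powr s))"
    by (simp add: ennreal_mult'[symmetric])
  also have "\<dots> = ennreal (K * (2 powr (s - r - 1)) ^ n) + ennreal (K * (2 powr (1 - s)) ^ Suc n)"
    by (simp only: outer inner)
  finally show ?thesis .
qed

lemma set_integrable_japanese_weight:
  fixes M :: "'a::real_normed_vector measure"
  assumes sets: "sets M = sets borel" and A: "A \<in> sets borel"
    and s: "1 < s" "s - 1 < r" and "K \<ge> 0"
    and shells: "\<And>lam. lam > 0 \<Longrightarrow> emeasure M (shell A lam) \<le> ennreal (K * lam powr s)"
  shows "set_integrable M A (\<lambda>z. japanese z powr (-r) / norm z)"
  unfolding set_integrable_def
proof (rule integrableI_bounded)
  have borel_M: "borel_measurable M = borel_measurable borel"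
    by (rule measurable_cong_sets[OF sets refl])
  show "(\<lambda>z. indicator A z *\<^sub>R (japanese z powr (-r) / norm z)) \<in> borel_measurable M"
    unfolding borel_M japanese_def using A by measurable
  define q1 :: real where "q1 = 2 powr (s - r - 1)"
  define q2 :: real where "q2 = 2 powr (1 - s)"
  have q: "q1 < 1" "q2 < 1" using s by (auto simp: q1_def q2_def intro!: powr_less_one)
  have majorant_measurable: "dyadic_majorant A r n \<in> borel_measurable M" for n
    unfolding dyadic_majorant_def borel_M using A shell_borel by measurable
  have "(\<integral>\<^sup>+z. ennreal (norm (indicator A z *\<^sub>R (japanese z powr (-r) / norm z))) \<partial>M)
      \<le> (\<integral>\<^sup>+z. (\<Sum>n. dyadic_majorant A r n z) \<partial>M)"
    using japanese_weight_le_dyadic_majorant[of r A] s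
    by (intro nn_integral_mono) (simp add: abs_mult)
  also have "\<dots> = (\<Sum>n. \<integral>\<^sup>+z. dyadic_majorant A r n z \<partial>M)"
    by (rule nn_integral_suminf[OF majorant_measurable])
  also have "\<dots> \<le> (\<Sum>n. ennreal (K * q1 ^ n + K * q2 * q2 ^ n))"
  proof (intro suminf_le summableI)
    fix n
    show "(\<integral>\<^sup>+z. dyadic_majorant A r n z \<partial>M) \<le> ennreal (K * q1 ^ n + K * q2 * q2 ^ n)"
      using nn_integral_dyadic_majorant_le[OF sets A shells, of r n] \<open>K \<ge> 0\<close>
      by (simp add: q1_def q2_def ennreal_plus mult.assoc)
  qed
  also have "\<dots> = ennreal (\<Sum>n. K * q1 ^ n + K * q2 * q2 ^ n)"
    using \<open>K \<ge> 0\<close> q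
    by (intro suminf_ennreal2 summable_add summable_mult summable_geometric) (auto simp: q1_def q2_def)
  also have "\<dots> < \<infinity>" by simp
  finally show "(\<integral>\<^sup>+z. ennreal (norm (indicator A z *\<^sub>R (japanese z powr (-r) / norm z))) \<partial>M) < \<infinity>" .
qed

lemma Cr_space_norm_le:
  assumes "f \<in> Cr_space r"
  shows "cmod (f z) \<le> Cr_norm r f * japanese z powr (-r)"
proof -
  have "japanese z > 0" using japanese_ge_one[of z] by linarith
  have "cmod (f z) * japanese z powr r \<le> Cr_norm r f"
    using assms unfolding Cr_space_def Cr_norm_def by (intro cSUP_upper) auto
  then have "cmod (f z) * japanese z powr r * japanese z powr (-r) \<le> Cr_norm r f * japanese z powr (-r)"
    by (rule mult_right_mono) simp
  then show ?thesis
    using \<open>japanese z > 0\<close> by (simp add: mult.assoc powr_add[symmetric])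
qed

lemma Cr_space_diff:
  assumes "f \<in> Cr_space r" "g \<in> Cr_space r"
  shows "(\<lambda>z. f z - g z) \<in> Cr_space r"
  unfolding Cr_space_def
proof (intro CollectI conjI)
  show "continuous_on UNIV (\<lambda>z. f z - g z)"
    using assms unfolding Cr_space_def by (auto intro: continuous_on_diff)
  show "bdd_above (range (\<lambda>z. cmod (f z - g z) * japanese z powr r))"
  proof (rule bdd_aboveI2)
    fix z
    have "cmod (f z - g z) * japanese z powr r \<le> cmod (f z) * japanese z powr r + cmod (g z) * japanese z powr r"
      by (metis distrib_right mult_right_mono norm_triangle_ineq4 powr_ge_zero)
    also have "\<dots> \<le> Cr_norm r f + Cr_norm r g"
      using assms unfolding Cr_space_def Cr_norm_def by (intro add_mono cSUP_upper) auto
    finally show "cmod (f z - g z) * japanese z powr r \<le> Cr_norm r f + Cr_norm r g" .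
  qed
qed

lemma set_integrable_Cr_div_norm:
  fixes M :: "'a::real_normed_vector measure"
  assumes sets: "sets M = sets borel" and A: "A \<in> sets borel"
    and weight: "set_integrable M A (\<lambda>z. japanese z powr (-r) / norm z)"
    and f: "f \<in> Cr_space r"
  shows "set_integrable M A (\<lambda>z. f z / complex_of_real (norm z))"
    and "cmod (LINT z:A|M. f z / complex_of_real (norm z))
      \<le> Cr_norm r f * (LINT z:A|M. japanese z powr (-r) / norm z)"
proof -
  have pointwise: "cmod (f z / complex_of_real (norm z)) \<le> Cr_norm r f * (japanese z powr (-r) / norm z)" for z
    using Cr_space_norm_le[OF f, of z] by (simp add: norm_divide divide_right_mono)
  have bound: "set_integrable M A (\<lambda>z. Cr_norm r f * (japanese z powr (-r) / norm z))"
    by (intro set_integrable_mult_right weight)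
  have "f \<in> borel_measurable borel"
    using f unfolding Cr_space_def by (auto intro: borel_measurable_continuous_onI)
  then have "set_borel_measurable M A (\<lambda>z. f z / complex_of_real (norm z))"
    unfolding set_borel_measurable_def measurable_cong_sets[OF sets refl] using A by measurable
  moreover have "norm (f z / complex_of_real (norm z))
      \<le> norm (Cr_norm r f * (japanese z powr (-r) / norm z))" for z
    using pointwise[of z] abs_ge_self order_trans unfolding real_norm_def by blast
  ultimately show integrable: "set_integrable M A (\<lambda>z. f z / complex_of_real (norm z))"
    by (intro set_integrable_bound[OF bound] AE_I2 impI)
  have "cmod (LINT z:A|M. f z / complex_of_real (norm z)) \<le> (LINT z:A|M. cmod (f z / complex_of_real (norm z)))"
    using integrable by (rule set_integral_norm_bound)
  also have "\<dots> \<le> (LINT z:A|M. Cr_norm r f * (japanese z powr (-r) / norm z))"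
    using integrable bound pointwise by (intro set_integral_mono) (auto simp: set_integrable_norm)
  also have "\<dots> = Cr_norm r f * (LINT z:A|M. japanese z powr (-r) / norm z)"
    by (rule set_integral_mult_right)
  finally show "cmod (LINT z:A|M. f z / complex_of_real (norm z))
      \<le> Cr_norm r f * (LINT z:A|M. japanese z powr (-r) / norm z)" .
qed

section \<open>Charts of Sigma_*\<close>

lemma sets_surf_measure [simp]: "sets surf_measure = sets borel"
  unfolding surf_measure_def by simp

lemma Sigma_star_borel: "Sigma_star \<in> sets borel"
proof -
  have "Sigma_star = {z :: (real^'n) \<times> (real^'n). fst z \<bullet> snd z = 0} - {0}"
    unfolding Sigma_star_def by auto
  also have "\<dots> \<in> sets borel"
    by (intro sets.Diff borel_closed closed_Collect_eq) (auto intro!: continuous_intros)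
  finally show ?thesis .
qed

text \<open>Solving x . y = 0 for y_i: on the hyperplane y_i = 0 this parametrises Sigma_* where
  x_i \<noteq> 0.\<close>

definition Sigma_chart :: "'n::finite \<Rightarrow> (real^'n) \<times> (real^'n) \<Rightarrow> (real^'n) \<times> (real^'n)" where
  "Sigma_chart i z = (fst z, snd z - ((fst z \<bullet> snd z) / fst z $ i) *\<^sub>R axis i 1)"

definition chart_domain :: "'n::finite \<Rightarrow> real \<Rightarrow> ((real^'n) \<times> (real^'n)) set" where
  "chart_domain i c = {z. c \<le> \<bar>fst z $ i\<bar> \<and> norm (fst z) \<le> 2 \<and> norm (snd z) \<le> 4 \<and> snd z $ i = 0}"

lemma abs_divide_diff_le:
  fixes p p' a a' c :: real
  assumes "c > 0" "c \<le> \<bar>a\<bar>" "c \<le> \<bar>a'\<bar>"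
  shows "\<bar>p / a - p' / a'\<bar> \<le> (\<bar>p\<bar> * \<bar>a' - a\<bar> + \<bar>a\<bar> * \<bar>p - p'\<bar>) / c\<^sup>2"
proof -
  have "a \<noteq> 0" "a' \<noteq> 0" using assms by auto
  then have "\<bar>p / a - p' / a'\<bar> = \<bar>p * (a' - a) + a * (p - p')\<bar> / \<bar>a * a'\<bar>"
    by (simp add: field_simps abs_divide)
  also have "\<dots> \<le> (\<bar>p\<bar> * \<bar>a' - a\<bar> + \<bar>a\<bar> * \<bar>p - p'\<bar>) / c\<^sup>2"
  proof (rule frac_le)
    show "\<bar>p * (a' - a) + a * (p - p')\<bar> \<le> \<bar>p\<bar> * \<bar>a' - a\<bar> + \<bar>a\<bar> * \<bar>p - p'\<bar>"
      by (metis abs_mult abs_triangle_ineq)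
    show "c\<^sup>2 \<le> \<bar>a * a'\<bar>"
      unfolding power2_eq_square abs_mult using assms by (intro mult_mono) auto
  qed (use assms in auto)
  finally show ?thesis .
qed

lemma abs_inner_diff_le:
  fixes x y x' y' :: "'a::real_inner"
  shows "\<bar>x \<bullet> y - x' \<bullet> y'\<bar> \<le> norm (x - x') * norm y + norm x' * norm (y - y')"
proof -
  have "x \<bullet> y - x' \<bullet> y' = (x - x') \<bullet> y + x' \<bullet> (y - y')"
    by (simp add: inner_diff_left inner_diff_right)
  then have "\<bar>x \<bullet> y - x' \<bullet> y'\<bar> \<le> \<bar>(x - x') \<bullet> y\<bar> + \<bar>x' \<bullet> (y - y')\<bar>"
    by simp
  also have "\<dots> \<le> norm (x - x') * norm y + norm x' * norm (y - y')"
    by (intro add_mono Cauchy_Schwarz_ineq2)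
  finally show ?thesis .
qed

lemma Sigma_chart_coefficient_Lipschitz:
  fixes i :: "'n::finite"
  assumes "c > 0" "(x, y) \<in> chart_domain i c" "(x', y') \<in> chart_domain i c"
  shows "\<bar>(x \<bullet> y) / x $ i - (x' \<bullet> y') / x' $ i\<bar> \<le> 20 / c\<^sup>2 * dist (x, y) (x', y')"
proof -
  define \<delta> where "\<delta> = dist (x, y) (x', y')"
  have dx: "norm (x - x') \<le> \<delta>" and dy: "norm (y - y') \<le> \<delta>"
    using dist_fst_le[of "(x, y)" "(x', y')"] dist_snd_le[of "(x, y)" "(x', y')"]
    unfolding \<delta>_def by (simp_all add: dist_norm)
  have bounds: "norm x \<le> 2" "norm y \<le> 4" "c \<le> \<bar>x $ i\<bar>" "norm x' \<le> 2" "c \<le> \<bar>x' $ i\<bar>"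
    using assms(2,3) unfolding chart_domain_def by auto
  have "\<bar>x \<bullet> y\<bar> \<le> 8"
    using Cauchy_Schwarz_ineq2[of x y] mult_mono[OF bounds(1,2)] by simp
  moreover have "\<bar>x' $ i - x $ i\<bar> \<le> \<delta>"
    using component_le_norm_cart[of "x' - x" i] dx by (simp add: norm_minus_commute)
  moreover have "\<bar>x $ i\<bar> \<le> 2"
    using component_le_norm_cart[of x i] bounds(1) by linarith
  moreover have "\<bar>x \<bullet> y - x' \<bullet> y'\<bar> \<le> 6 * \<delta>"
  proof -
    have "\<bar>x \<bullet> y - x' \<bullet> y'\<bar> \<le> norm (x - x') * norm y + norm x' * norm (y - y')"
      by (rule abs_inner_diff_le)
    also have "\<dots> \<le> \<delta> * 4 + 2 * \<delta>"
      using dx dy bounds by (intro add_mono mult_mono) (auto simp: \<delta>_def)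
    finally show ?thesis by simp
  qed
  ultimately have "\<bar>x \<bullet> y\<bar> * \<bar>x' $ i - x $ i\<bar> + \<bar>x $ i\<bar> * \<bar>x \<bullet> y - x' \<bullet> y'\<bar> \<le> 8 * \<delta> + 2 * (6 * \<delta>)"
    by (intro add_mono mult_mono) auto
  then have "\<bar>(x \<bullet> y) / x $ i - (x' \<bullet> y') / x' $ i\<bar> \<le> (8 * \<delta> + 2 * (6 * \<delta>)) / c\<^sup>2"
    using abs_divide_diff_le[OF assms(1) bounds(3,5), of "x \<bullet> y" "x' \<bullet> y'"]
    by (meson divide_right_mono order_trans zero_le_power2)
  then show ?thesis unfolding \<delta>_def by simp
qed

lemma Sigma_chart_Lipschitz:
  fixes i :: "'n::finite"
  assumes "c > 0" "u \<in> chart_domain i c" "v \<in> chart_domain i c"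
  shows "dist (Sigma_chart i u) (Sigma_chart i v) \<le> (1 + 20 / c\<^sup>2) * dist u v"
proof -
  obtain x y x' y' where uv: "u = (x, y)" "v = (x', y')" by fastforce
  define q where "q = (x \<bullet> y) / x $ i"
  define q' where "q' = (x' \<bullet> y') / x' $ i"
  have diff: "Sigma_chart i u - Sigma_chart i v = (x - x', y - y') - (0, (q - q') *\<^sub>R axis i 1)"
    unfolding Sigma_chart_def uv q_def q'_def by (simp add: algebra_simps)
  have "dist (Sigma_chart i u) (Sigma_chart i v)
      \<le> norm (x - x', y - y') + norm ((0::real^'n), (q - q') *\<^sub>R axis i (1::real))"
    unfolding dist_norm diff by (rule norm_triangle_ineq4)
  also have "norm (x - x', y - y') = dist u v" unfolding uv by (simp add: dist_norm)
  also have "norm ((0::real^'n), (q - q') *\<^sub>R axis i (1::real)) = \<bar>q - q'\<bar>" by simp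
  finally show ?thesis
    using Sigma_chart_coefficient_Lipschitz[OF assms[unfolded uv]]
    unfolding q_def q'_def uv by (simp add: algebra_simps)
qed

lemma Sigma_chart_inverse:
  assumes "x \<bullet> y = 0" "x $ i \<noteq> 0"
  shows "Sigma_chart i (x, y - (y $ i) *\<^sub>R axis i 1) = (x, y)"
proof -
  have "x \<bullet> (y - (y $ i) *\<^sub>R axis i 1) = - (y $ i * x $ i)"
    using assms(1) by (simp add: inner_diff_right inner_axis)
  then show ?thesis using assms(2) unfolding Sigma_chart_def by simp
qed

lemma Sigma_star_cone_subset_chart_image:
  fixes i :: "'n::finite"
  assumes "c > 0" "lam > 0"
  shows "shell Sigma_star lam \<inter> {z. c * norm z \<le> \<bar>fst z $ i\<bar>}
    \<subseteq> (\<lambda>u. lam *\<^sub>R Sigma_chart i u) ` chart_domain i c"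
proof
  fix z assume z: "z \<in> shell Sigma_star lam \<inter> {z. c * norm z \<le> \<bar>fst z $ i\<bar>}"
  then have "norm z \<le> 2 * lam" "lam \<le> norm z" "c * norm z \<le> \<bar>fst z $ i\<bar>" "fst z \<bullet> snd z = 0"
    unfolding shell_def Sigma_star_def by auto
  define w where "w = z /\<^sub>R lam"
  have "norm w \<le> 2" unfolding w_def using \<open>norm z \<le> 2 * lam\<close> assms(2) by (simp add: field_simps)
  have w0: "fst w \<bullet> snd w = 0" unfolding w_def using \<open>fst z \<bullet> snd z = 0\<close> by simp
  have "c \<le> c * norm z / lam" using assms \<open>lam \<le> norm z\<close> by (simp add: field_simps)
  also have "\<dots> \<le> \<bar>fst z $ i\<bar> / lam" using \<open>c * norm z \<le> \<bar>fst z $ i\<bar>\<close> assms(2) by (simp add: divide_right_mono)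
  also have "\<dots> = \<bar>fst w $ i\<bar>" unfolding w_def using assms(2) by (simp add: abs_mult field_simps)
  finally have cw: "c \<le> \<bar>fst w $ i\<bar>" .
  define u where "u = (fst w, snd w - (snd w $ i) *\<^sub>R axis i 1)"
  have "norm (snd u) \<le> norm (snd w) + \<bar>snd w $ i\<bar>"
    unfolding u_def using norm_triangle_ineq4[of "snd w" "(snd w $ i) *\<^sub>R axis i 1"] by simp
  moreover have "\<bar>snd w $ i\<bar> \<le> norm (snd w)" by (rule component_le_norm_cart)
  moreover have "norm (fst w) \<le> 2" "norm (snd w) \<le> 2"
    using norm_fst_le[of "fst w" "snd w"] norm_snd_le[of "snd w" "fst w"] \<open>norm w \<le> 2\<close> by simp_all
  ultimately have "u \<in> chart_domain i c" unfolding chart_domain_def u_def using cw by auto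
  moreover have "Sigma_chart i u = w"
    unfolding u_def using Sigma_chart_inverse[OF w0] cw assms(1) by auto
  then have "z = lam *\<^sub>R Sigma_chart i u" unfolding w_def using assms(2) by simp
  ultimately show "z \<in> (\<lambda>u. lam *\<^sub>R Sigma_chart i u) ` chart_domain i c" by blast
qed

lemma chart_domain_subset_subspace_cube:
  fixes i :: "'n::finite"
  shows "chart_domain i c \<subseteq> subspace_cube (Basis - {(0, axis i 1)}) 4"
proof
  fix z :: "(real^'n) \<times> (real^'n)" assume z: "z \<in> chart_domain i c"
  obtain x y where xy: "z = (x, y)" by fastforce
  have "\<bar>x $ j\<bar> \<le> 4" "\<bar>y $ j\<bar> \<le> 4" for j
    using z component_le_norm_cart[of x j] component_le_norm_cart[of y j]
    unfolding chart_domain_def xy by auto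
  then show "z \<in> subspace_cube (Basis - {(0, axis i 1)}) 4"
    using z unfolding subspace_cube_def chart_domain_def xy
    by (auto simp: Basis_prod_def Basis_vec_def inner_axis axis_eq_axis)
qed

lemma exists_large_coordinate:
  fixes z :: "(real^'n::finite) \<times> (real^'n)"
  shows "\<exists>i. norm z \<le> 2 * CARD('n) * \<bar>fst z $ i\<bar> \<or> norm z \<le> 2 * CARD('n) * \<bar>snd z $ i\<bar>"
proof (rule ccontr)
  assume "\<not> ?thesis"
  then have small: "2 * CARD('n) * \<bar>fst z $ i\<bar> < norm z" "2 * CARD('n) * \<bar>snd z $ i\<bar> < norm z" for i
    by (meson not_le)+
  have "norm z \<le> norm (fst z) + norm (snd z)" using norm_Pair_le[of "fst z" "snd z"] by simp
  also have "\<dots> \<le> (\<Sum>j\<in>UNIV. \<bar>fst z $ j\<bar>) + (\<Sum>j\<in>UNIV. \<bar>snd z $ j\<bar>)"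
    by (intro add_mono norm_le_l1_cart)
  also have "\<dots> < (\<Sum>j\<in>(UNIV::'n set). norm z / (2 * CARD('n))) + (\<Sum>j\<in>(UNIV::'n set). norm z / (2 * CARD('n)))"
    using small by (intro add_strict_mono sum_strict_mono) (auto simp: field_simps)
  also have "\<dots> = norm z" by simp
  finally show False by simp
qed

lemma card_Basis_Diff_axis:
  fixes i :: "'n::finite"
  shows "card (Basis - {(0::real^'n, axis i (1::real))}) = 2 * CARD('n) - 1"
proof -
  have "(0::real^'n, axis i (1::real)) \<in> Basis"
    by (auto simp: Basis_prod_def Basis_vec_def)
  then show ?thesis by (simp add: card_Diff_singleton)
qed

section \<open>Surface measure of the shells of Sigma_*\<close>

lemma shell_Sigma_star_subset_cones:
  fixes c :: real
  assumes "c \<le> 1 / (2 * CARD('n))"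
  shows "shell (Sigma_star :: ((real^'n::finite) \<times> (real^'n)) set) lam
    \<subseteq> (\<Union>i. shell Sigma_star lam \<inter> ({z. c * norm z \<le> \<bar>fst z $ i\<bar>} \<union> {z. c * norm z \<le> \<bar>snd z $ i\<bar>}))"
proof
  fix z :: "(real^'n) \<times> (real^'n)" assume "z \<in> shell Sigma_star lam"
  obtain i where "norm z \<le> 2 * CARD('n) * \<bar>fst z $ i\<bar> \<or> norm z \<le> 2 * CARD('n) * \<bar>snd z $ i\<bar>"
    using exists_large_coordinate[of z] by blast
  then have "norm z / (2 * CARD('n)) \<le> \<bar>fst z $ i\<bar> \<or> norm z / (2 * CARD('n)) \<le> \<bar>snd z $ i\<bar>"
    by (simp add: pos_divide_le_eq finite_UNIV_card_ge_0 mult.commute)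
  moreover have "c * norm z \<le> norm z / (2 * CARD('n))"
    using mult_right_mono[OF assms norm_ge_zero[of z]] by simp
  ultimately have "c * norm z \<le> \<bar>fst z $ i\<bar> \<or> c * norm z \<le> \<bar>snd z $ i\<bar>"
    by linarith
  then show "z \<in> (\<Union>i. shell Sigma_star lam \<inter> ({z. c * norm z \<le> \<bar>fst z $ i\<bar>} \<union> {z. c * norm z \<le> \<bar>snd z $ i\<bar>}))"
    using \<open>z \<in> shell Sigma_star lam\<close> by blast
qed

lemma hausdorff_outer_chart_domain_le:
  fixes i :: "'n::finite"
  defines "m \<equiv> 2 * CARD('n) - 1"
  shows "hausdorff_outer m (chart_domain i c) \<le> ennreal (hausdorff_const m * (11 * real m) ^ m)"
proof -
  define B where "B = Basis - {(0::real^'n, axis i (1::real))}"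
  have "card B = m" unfolding B_def m_def by (rule card_Basis_Diff_axis)
  have "hausdorff_outer m (chart_domain i c) \<le> hausdorff_outer m (subspace_cube B 4)"
    unfolding B_def by (intro hausdorff_outer_mono chart_domain_subset_subspace_cube)
  also have "\<dots> \<le> ennreal (hausdorff_const (card B) * ((2 * 4 + 3) * real (card B)) ^ card B)"
    unfolding \<open>card B = m\<close>[symmetric] by (rule hausdorff_outer_subspace_cube_le) (auto simp: B_def)
  finally show ?thesis unfolding \<open>card B = m\<close> by simp
qed

lemma hausdorff_outer_Sigma_star_cone_le:
  fixes c :: real
  assumes "c > 0"
  shows "\<exists>K\<ge>0. \<forall>(i :: 'n::finite) lam. lam > 0 \<longrightarrow>
      hausdorff_outer (real (2 * CARD('n) - 1)) (shell Sigma_star lam \<inter> {z. c * norm z \<le> \<bar>fst z $ i\<bar>})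
      \<le> ennreal (K * lam powr real (2 * CARD('n) - 1))"
proof -
  define m where "m = 2 * CARD('n) - 1"
  define L where "L = 1 + 20 / c\<^sup>2"
  define K0 where "K0 = hausdorff_const m * (11 * real m) ^ m"
  have "L > 0" unfolding L_def by (simp add: add_pos_nonneg)
  have "K0 \<ge> 0" unfolding K0_def by (simp add: hausdorff_const_nonneg)
  show ?thesis
  proof (intro exI[of _ "L powr m * K0"] conjI allI impI)
    show "L powr m * K0 \<ge> 0" using \<open>K0 \<ge> 0\<close> by simp
    fix i :: 'n and lam :: real assume "lam > 0"
    have lip: "dist (lam *\<^sub>R Sigma_chart i u) (lam *\<^sub>R Sigma_chart i v) \<le> (lam * L) * dist u v"
      if "u \<in> chart_domain i c" "v \<in> chart_domain i c" for u v
    proof -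
      have "dist (lam *\<^sub>R Sigma_chart i u) (lam *\<^sub>R Sigma_chart i v) = lam * dist (Sigma_chart i u) (Sigma_chart i v)"
        using \<open>lam > 0\<close> by (simp add: dist_norm flip: scaleR_diff_right)
      also have "\<dots> \<le> lam * (L * dist u v)"
        using Sigma_chart_Lipschitz[OF assms that] \<open>lam > 0\<close> unfolding L_def by simp
      finally show ?thesis by simp
    qed
    have "hausdorff_outer m (shell Sigma_star lam \<inter> {z. c * norm z \<le> \<bar>fst z $ i\<bar>})
        \<le> hausdorff_outer m ((\<lambda>u. lam *\<^sub>R Sigma_chart i u) ` chart_domain i c)"
      by (rule hausdorff_outer_mono[OF Sigma_star_cone_subset_chart_image[OF assms \<open>lam > 0\<close>]])
    also have "\<dots> \<le> ennreal ((lam * L) powr m) * hausdorff_outer m (chart_domain i c)"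
      using \<open>lam > 0\<close> \<open>L > 0\<close> lip by (intro hausdorff_outer_Lipschitz_image) auto
    also have "\<dots> \<le> ennreal ((lam * L) powr m) * ennreal K0"
      unfolding K0_def m_def by (intro mult_left_mono hausdorff_outer_chart_domain_le) simp
    also have "\<dots> = ennreal (L powr m * K0 * lam powr m)"
      using \<open>lam > 0\<close> \<open>L > 0\<close> \<open>K0 \<ge> 0\<close> by (simp add: ennreal_mult'[symmetric] powr_mult mult_ac)
    finally show "hausdorff_outer (real (2 * CARD('n) - 1)) (shell Sigma_star lam \<inter> {z. c * norm z \<le> \<bar>fst z $ i\<bar>})
      \<le> ennreal (L powr m * K0 * lam powr real (2 * CARD('n) - 1))"
      unfolding m_def .
  qed
qed

lemma hausdorff_outer_swap_image_le:
  fixes S :: "('a::metric_space \<times> 'b::metric_space) set"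
  assumes "s \<ge> 0"
  shows "hausdorff_outer s (prod.swap ` S) \<le> hausdorff_outer s S"
proof -
  have "hausdorff_outer s (prod.swap ` S) \<le> ennreal (1 powr s) * hausdorff_outer s S"
    by (rule hausdorff_outer_Lipschitz_image[OF assms]) (auto simp: dist_Pair_Pair dist_commute add.commute)
  then show ?thesis by simp
qed

lemma Sigma_star_cone_swap:
  fixes i :: "'n::finite"
  shows "shell Sigma_star lam \<inter> {z. c * norm z \<le> \<bar>snd z $ i\<bar>}
    \<subseteq> prod.swap ` (shell Sigma_star lam \<inter> {z. c * norm z \<le> \<bar>fst z $ i\<bar>})"
proof
  fix z :: "(real^'n) \<times> (real^'n)"
  assume z: "z \<in> shell Sigma_star lam \<inter> {z. c * norm z \<le> \<bar>snd z $ i\<bar>}"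
  obtain x y where xy: "z = (x, y)" by fastforce
  have "norm (y, x) = norm (x, y)" by (simp add: norm_Pair add.commute)
  then have "(y, x) \<in> shell Sigma_star lam \<inter> {z. c * norm z \<le> \<bar>fst z $ i\<bar>}"
    using z unfolding shell_def Sigma_star_def xy by (auto simp: inner_commute zero_prod_def)
  then show "z \<in> prod.swap ` (shell Sigma_star lam \<inter> {z. c * norm z \<le> \<bar>fst z $ i\<bar>})"
    unfolding xy by (rule rev_image_eqI) simp
qed

lemma emeasure_surf_measure_le_hausdorff_outer:
  assumes "A \<in> sets borel"
  shows "emeasure (surf_measure :: ((real^'n::finite) \<times> (real^'n)) measure) A
    \<le> hausdorff_outer (real (2 * CARD('n) - 1)) A"
  unfolding surf_measure_def using assms by (rule emeasure_hausdorff_measure_le)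

lemma emeasure_surf_measure_shell_le:
  shows "\<exists>K\<ge>0. \<forall>lam>0. emeasure (surf_measure :: ((real^'n::finite) \<times> (real^'n)) measure) (shell Sigma_star lam)
      \<le> ennreal (K * lam powr real (2 * CARD('n) - 1))"
proof -
  define m where "m = real (2 * CARD('n) - 1)"
  define c :: real where "c = 1 / (2 * CARD('n))"
  have "c > 0" unfolding c_def by (simp add: finite_UNIV_card_ge_0)
  obtain K where "K \<ge> 0" and cone: "\<And>(i :: 'n) lam. lam > 0 \<Longrightarrow>
      hausdorff_outer (real (2 * CARD('n) - 1)) (shell Sigma_star lam \<inter> {z. c * norm z \<le> \<bar>fst z $ i\<bar>})
      \<le> ennreal (K * lam powr real (2 * CARD('n) - 1))"
    using hausdorff_outer_Sigma_star_cone_le[OF \<open>c > 0\<close>, where 'n='n] by blast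
  show ?thesis
  proof (intro exI[of _ "2 * CARD('n) * K"] conjI allI impI)
    show "2 * CARD('n) * K \<ge> 0" using \<open>K \<ge> 0\<close> by simp
    fix lam :: real assume "lam > 0"
    define X where "X i = shell Sigma_star lam \<inter> {z :: (real^'n) \<times> (real^'n). c * norm z \<le> \<bar>fst z $ i\<bar>}" for i
    define Y where "Y i = shell Sigma_star lam \<inter> {z :: (real^'n) \<times> (real^'n). c * norm z \<le> \<bar>snd z $ i\<bar>}" for i
    have borel: "X i \<in> sets borel" "Y i \<in> sets borel" for i
      unfolding X_def Y_def
      by (intro sets.Int shell_borel Sigma_star_borel borel_closed closed_Collect_le;
          auto intro!: continuous_intros)+
    have X: "emeasure surf_measure (X i) \<le> ennreal (K * lam powr m)" for i
      using emeasure_surf_measure_le_hausdorff_outer[OF borel(1)] cone[OF \<open>lam > 0\<close>, of i]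
      unfolding X_def m_def by (rule order_trans)
    have Y: "emeasure surf_measure (Y i) \<le> ennreal (K * lam powr m)" for i
    proof -
      have "hausdorff_outer m (Y i) \<le> hausdorff_outer m (prod.swap ` X i)"
        unfolding X_def Y_def by (intro hausdorff_outer_mono Sigma_star_cone_swap)
      also have "\<dots> \<le> hausdorff_outer m (X i)"
        unfolding m_def by (intro hausdorff_outer_swap_image_le of_nat_0_le_iff)
      finally show ?thesis
        using emeasure_surf_measure_le_hausdorff_outer[OF borel(2)[of i]] cone[OF \<open>lam > 0\<close>, of i]
        unfolding X_def m_def by order
    qed
    have "shell Sigma_star lam \<subseteq> (\<Union>i. X i \<union> Y i)"
      using shell_Sigma_star_subset_cones[of c lam] unfolding X_def Y_def c_def by auto
    then have "emeasure (surf_measure :: ((real^'n) \<times> (real^'n)) measure) (shell Sigma_star lam)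
        \<le> emeasure surf_measure (\<Union>i. X i \<union> Y i)"
      using borel by (intro emeasure_mono sets.finite_UN sets.Un) auto
    also have "\<dots> \<le> (\<Sum>i\<in>UNIV. emeasure surf_measure (X i \<union> Y i))"
      using borel by (intro emeasure_subadditive_finite) auto
    also have "\<dots> \<le> (\<Sum>i\<in>(UNIV :: 'n set). ennreal (K * lam powr m) + ennreal (K * lam powr m))"
      using borel X Y by (intro sum_mono order_trans[OF emeasure_subadditive] add_mono) auto
    also have "\<dots> = ennreal (2 * CARD('n) * K * lam powr m)"
      using \<open>K \<ge> 0\<close> by (simp add: ennreal_plus[symmetric] ennreal_of_nat_eq_real_of_nat ennreal_mult'[symmetric] del: ennreal_plus)
    finally show "emeasure (surf_measure :: ((real^'n) \<times> (real^'n)) measure) (shell Sigma_star lam)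
        \<le> ennreal (2 * CARD('n) * K * lam powr real (2 * CARD('n) - 1))"
      unfolding m_def .
  qed
qed

lemma set_integrable_Sigma_star_weight:
  assumes "CARD('n::finite) \<ge> 2" "r > 2 * real CARD('n) - 2"
  shows "set_integrable (surf_measure :: ((real^'n) \<times> (real^'n)) measure) Sigma_star
    (\<lambda>z. japanese z powr (-r) / norm z)"
proof -
  obtain K where "K \<ge> 0" and "\<forall>lam>0. emeasure (surf_measure :: ((real^'n) \<times> (real^'n)) measure) (shell Sigma_star lam)
      \<le> ennreal (K * lam powr real (2 * CARD('n) - 1))"
    using emeasure_surf_measure_shell_le[where 'n='n] by blast
  then show ?thesis
    using assms Sigma_star_borel
    by (intro set_integrable_japanese_weight[where s = "real (2 * CARD('n) - 1)" and K = K]) auto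
qed

lemma Sigma_functional_lincomb:
  assumes "set_integrable surf_measure Sigma_star (\<lambda>z. f z / complex_of_real (norm z))"
    and "set_integrable surf_measure Sigma_star (\<lambda>z. g z / complex_of_real (norm z))"
  shows "Sigma_functional (\<lambda>z. a * f z + b * g z) = a * Sigma_functional f + b * Sigma_functional g"
proof -
  have eq: "(\<lambda>z. (a * f z + b * g z) / complex_of_real (norm z))
      = (\<lambda>z. a * (f z / complex_of_real (norm z)) + b * (g z / complex_of_real (norm z)))"
    by (simp add: add_divide_distrib)
  have "Sigma_functional (\<lambda>z. a * f z + b * g z)
      = (LINT z:Sigma_star|surf_measure. a * (f z / complex_of_real (norm z)))
        + (LINT z:Sigma_star|surf_measure. b * (g z / complex_of_real (norm z)))"
    unfolding Sigma_functional_def eq by (intro set_integral_add(2) set_integrable_mult_right assms)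
  then show ?thesis
    unfolding Sigma_functional_def by (simp only: set_integral_mult_right)
qed

lemma Sigma_functional_diff:
  assumes "set_integrable surf_measure Sigma_star (\<lambda>z. f z / complex_of_real (norm z))"
    and "set_integrable surf_measure Sigma_star (\<lambda>z. g z / complex_of_real (norm z))"
  shows "Sigma_functional (\<lambda>z. f z - g z) = Sigma_functional f - Sigma_functional g"
proof -
  have eq: "(\<lambda>z. (f z - g z) / complex_of_real (norm z))
      = (\<lambda>z. f z / complex_of_real (norm z) - g z / complex_of_real (norm z))"
    by (simp add: diff_divide_distrib)
  show ?thesis
    unfolding Sigma_functional_def eq by (rule set_integral_diff(2)[OF assms])
qed

lemma set_integrable_Sigma_star_Cr:
  assumes "CARD('n::finite) \<ge> 2" "r > 2 * real CARD('n) - 2" "f \<in> Cr_space r"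
  shows "set_integrable (surf_measure :: ((real^'n) \<times> (real^'n)) measure) Sigma_star
    (\<lambda>z. f z / complex_of_real (norm z))"
  using sets_surf_measure Sigma_star_borel set_integrable_Sigma_star_weight[OF assms(1,2)] assms(3)
  by (rule set_integrable_Cr_div_norm(1))

lemma Sigma_functional_continuous:
  assumes "CARD('n::finite) \<ge> 2" "r > 2 * real CARD('n) - 2"
    and f: "f \<in> Cr_space r" and "\<epsilon> > 0"
  shows "\<exists>\<delta>>0. \<forall>g \<in> Cr_space r. Cr_norm r (\<lambda>z :: (real^'n) \<times> (real^'n). g z - f z) < \<delta> \<longrightarrow>
    cmod (Sigma_functional g - Sigma_functional f) < \<epsilon>"
proof -
  define W where "W = (LINT z:Sigma_star|(surf_measure :: ((real^'n) \<times> (real^'n)) measure).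
    japanese z powr (-r) / norm z)"
  have "W \<ge> 0"
    unfolding W_def set_lebesgue_integral_def by (intro integral_nonneg_AE AE_I2) (simp add: indicator_def)
  show ?thesis
  proof (intro exI[of _ "\<epsilon> / (W + 1)"] conjI ballI impI)
    show "\<epsilon> / (W + 1) > 0" using \<open>\<epsilon> > 0\<close> \<open>W \<ge> 0\<close> by simp
    fix g assume g: "g \<in> Cr_space r" and close: "Cr_norm r (\<lambda>z. g z - f z) < \<epsilon> / (W + 1)"
    have "cmod (Sigma_functional g - Sigma_functional f) = cmod (Sigma_functional (\<lambda>z. g z - f z))"
      using set_integrable_Sigma_star_Cr[OF assms(1,2)] f g by (simp add: Sigma_functional_diff)
    also have "\<dots> \<le> Cr_norm r (\<lambda>z. g z - f z) * W"
      unfolding W_def Sigma_functional_def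
      using sets_surf_measure Sigma_star_borel set_integrable_Sigma_star_weight[OF assms(1,2)] Cr_space_diff[OF g f]
      by (rule set_integrable_Cr_div_norm(2))
    also have "\<dots> \<le> \<epsilon> / (W + 1) * W"
      using close \<open>W \<ge> 0\<close> by (intro mult_right_mono) auto
    also have "\<dots> < \<epsilon>"
      using \<open>\<epsilon> > 0\<close> \<open>W \<ge> 0\<close> by (simp add: field_simps)
    finally show "cmod (Sigma_functional g - Sigma_functional f) < \<epsilon>" .
  qed
qed

theorem proposition3p4:
  fixes r :: real
  assumes "CARD('n::finite) \<ge> 2"
    and "r > 2 * real CARD('n) - 2"
  shows "(\<forall>f \<in> Cr_space r.
            set_integrable (surf_measure :: ((real^'n) \<times> (real^'n)) measure) Sigma_star
              (\<lambda>z. f z / complex_of_real (norm z)))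
       \<and> (\<forall>f \<in> Cr_space r. \<forall>g \<in> Cr_space r. \<forall>a b :: complex.
            Sigma_functional (\<lambda>z :: (real^'n) \<times> (real^'n). a * f z + b * g z)
              = a * Sigma_functional f + b * Sigma_functional g)
       \<and> (\<forall>f \<in> Cr_space r. \<forall>\<epsilon>>0. \<exists>\<delta>>0. \<forall>g \<in> Cr_space r.
            Cr_norm r (\<lambda>z :: (real^'n) \<times> (real^'n). g z - f z) < \<delta> \<longrightarrow>
              cmod (Sigma_functional g - Sigma_functional f) < \<epsilon>)"
  using set_integrable_Sigma_star_Cr[OF assms] Sigma_functional_continuous[OF assms]
  by (auto intro: Sigma_functional_lincomb)

end
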